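(* Let $G^\sigma$ be an oriented graph whose underlying graph $G$ is a simple connected graph with $n$ vertices and $m$ edges. Then $$sr(G^\sigma)-\alpha(G)\geqslant 4n-2m-3\sqrt{n(n-1)-2m+\tfrac{1}{4}}-\tfrac{7}{2},$$ with equality if and only if $G\cong S_n$ or $G\cong C_3$.
   Context: An oriented graph $G^\sigma$ is obtained from a simple graph $G$ by assigning a direction to each edge. Its skew-adjacency matrix $S(G^\sigma)=[s_{x,y}]$ has $s_{x,y}=1$ if there is an arc from $x$ to $y$, $s_{x,y}=-1$ if there is an arc from $y$ to $x$, and $0$ otherwise; the skew-rank $sr(G^\sigma)$ is the rank of $S(G^\sigma)$. $\alpha(G)$ is the independence number of $G$. $S_n$ denotes the star on $n$ vertices (the single vertex when $n=1$) and $C_3$ the triangle. *)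

theory Defs
  imports "HOL-Analysis.Analysis"
begin

text \<open>An oriented graph on the finite vertex type 'n (all of UNIV are vertices),
  given by its set of arcs A: no loops and no pair of opposite arcs.\<close>
definition oriented_graph :: "('n \<times> 'n) set \<Rightarrow> bool" where
  "oriented_graph A \<longleftrightarrow> (\<forall>x. (x, x) \<notin> A) \<and> (\<forall>x y. (x, y) \<in> A \<longrightarrow> (y, x) \<notin> A)"

definition und_adj :: "('n \<times> 'n) set \<Rightarrow> 'n \<Rightarrow> 'n \<Rightarrow> bool" where
  "und_adj A x y \<longleftrightarrow> (x, y) \<in> A \<or> (y, x) \<in> A"

definition num_edges :: "('n::finite \<times> 'n) set \<Rightarrow> nat" where
  "num_edges A = card {e. \<exists>x y. e = {x, y} \<and> und_adj A x y}"

definition skew_adj :: "('n::finite \<times> 'n) set \<Rightarrow> real^'n^'n" where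
  "skew_adj A = (\<chi> x y. if (x, y) \<in> A then 1 else if (y, x) \<in> A then -1 else 0)"

definition skew_rank :: "('n::finite \<times> 'n) set \<Rightarrow> nat" where
  "skew_rank A = rank (skew_adj A)"

definition connected_graph :: "('n \<Rightarrow> 'n \<Rightarrow> bool) \<Rightarrow> bool" where
  "connected_graph E \<longleftrightarrow> (\<forall>x y. E\<^sup>*\<^sup>* x y)"

definition independent_set :: "('n \<Rightarrow> 'n \<Rightarrow> bool) \<Rightarrow> 'n set \<Rightarrow> bool" where
  "independent_set E I \<longleftrightarrow> (\<forall>x\<in>I. \<forall>y\<in>I. \<not> E x y)"

definition independence_number :: "('n::finite \<Rightarrow> 'n \<Rightarrow> bool) \<Rightarrow> nat" where
  "independence_number E = Max (card ` {I. independent_set E I})"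

definition graph_iso :: "'a set \<Rightarrow> ('a \<Rightarrow> 'a \<Rightarrow> bool) \<Rightarrow> 'b set \<Rightarrow> ('b \<Rightarrow> 'b \<Rightarrow> bool) \<Rightarrow> bool" where
  "graph_iso V E W F \<longleftrightarrow> (\<exists>f. bij_betw f V W \<and> (\<forall>x\<in>V. \<forall>y\<in>V. E x y \<longleftrightarrow> F (f x) (f y)))"

text \<open>Star S_k on vertices {0..<k} with centre 0 (single vertex when k = 1).\<close>
definition star_adj :: "nat \<Rightarrow> nat \<Rightarrow> bool" where
  "star_adj i j \<longleftrightarrow> i \<noteq> j \<and> (i = 0 \<or> j = 0)"

text \<open>Triangle C_3 on vertices {0,1,2}.\<close>
definition tri_adj :: "nat \<Rightarrow> nat \<Rightarrow> bool" where
  "tri_adj i j \<longleftrightarrow> i \<noteq> j"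

end

theory Submission
  imports Defs
begin

text \<open>Lower bound: grow a BFS tree from a root and order the vertices by distance. Charging
  each non-tree edge to its later end shows that at most \<open>m - n + 1\<close> vertices have an
  earlier neighbour besides their parent. On the remaining vertices the
  graph is a forest, and peeling pendant vertices greedily yields an independent set \<open>I\<close>
  and a nonsingular principal submatrix on \<open>W\<close> with \<open>2 (n - (m - n + 1)) \<le> |W| + 2 |I|\<close>,
  i.e. \<open>4n \<le> sr + 2\<alpha> + 2m + 2\<close>. Since no edge lies inside a maximum independent set,
  \<open>m + \<alpha>(\<alpha> - 1)/2 \<le> n(n - 1)/2\<close>, i.e. \<open>\<alpha> - 1/2 \<le> \<surd>(n(n - 1) - 2m + 1/4)\<close>; the two bounds
  combine to the inequality. Equality forces both to be tight, which makes the graph a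
  complete split graph whose rank equation only admits the star and the triangle.\<close>

definition principal_submatrix_nonsingular :: "real^'n^'n \<Rightarrow> 'n set \<Rightarrow> bool" where
  "principal_submatrix_nonsingular M W \<longleftrightarrow>
     (\<forall>c. (\<forall>x\<in>W. (\<Sum>w\<in>W. c w * M$w$x) = 0) \<longrightarrow> (\<forall>w\<in>W. c w = 0))"

lemma principal_submatrix_nonsingular_empty: "principal_submatrix_nonsingular M {}"
  by (simp add: principal_submatrix_nonsingular_def)

lemma card_le_rank_if_principal_submatrix_nonsingular:
  fixes M :: "real^'n::finite^'n"
  assumes R: "principal_submatrix_nonsingular M W"
  shows "card W \<le> rank M"
proof -
  have zero_if_comb: "\<forall>w\<in>W. c w = 0" if "\<forall>x\<in>W. (\<Sum>w\<in>W. c w * M$w$x) = 0" for c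
    using R that unfolding principal_submatrix_nonsingular_def by blast
  have inj: "inj_on (\<lambda>w. M$w) W"
  proof (rule inj_onI, rule ccontr)
    fix a b assume a: "a \<in> W" and b: "b \<in> W" and eq: "M$a = M$b" and ne: "a \<noteq> b"
    define c where "c w = (if w = a then 1 else if w = b then -1 else 0 :: real)" for w
    have "(\<Sum>w\<in>W. c w * M$w$x) = 0" for x
    proof -
      have "(\<Sum>w\<in>W. c w * M$w$x) = (\<Sum>w\<in>{a,b}. c w * M$w$x)"
        by (rule sum.mono_neutral_right) (use a b in \<open>auto simp: c_def\<close>)
      also have "\<dots> = M$a$x - M$b$x" using ne by (simp add: c_def)
      finally show ?thesis using eq by simp
    qed
    then have "c a = 0" using zero_if_comb a by blast
    then show False by (simp add: c_def)
  qed
  have "independent ((\<lambda>w. M$w) ` W)"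
  proof
    assume "dependent ((\<lambda>w. M$w) ` W)"
    then obtain u where u_nz: "\<exists>v\<in>(\<lambda>w. M$w) ` W. u v \<noteq> 0"
      and "(\<Sum>v\<in>(\<lambda>w. M$w) ` W. u v *\<^sub>R v) = 0"
      using real_vector.dependent_finite[of "(\<lambda>w. M$w) ` W"] by auto
    then have comb: "(\<Sum>w\<in>W. u (M$w) *\<^sub>R M$w) = 0"
      by (simp add: sum.reindex[OF inj])
    have "(\<Sum>w\<in>W. u (M$w) * M$w$x) = 0" for x
    proof -
      have "(\<Sum>w\<in>W. u (M$w) *\<^sub>R M$w) $ x = 0" using comb by simp
      then show ?thesis by (simp add: sum_component)
    qed
    then have "\<forall>w\<in>W. u (M$w) = 0" using zero_if_comb[of "\<lambda>w. u (M$w)"] by blast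
    with u_nz show False by auto
  qed
  moreover have "(\<lambda>w. M$w) ` W \<subseteq> rows M"
    by (auto simp: rows_def row_def vec_lambda_eta)
  ultimately have "card ((\<lambda>w. M$w) ` W) \<le> dim (rows M)"
    by (rule independent_card_le_dim[rotated])
  then show ?thesis by (simp add: card_image[OF inj] row_rank_def)
qed

lemma principal_submatrix_nonsingular_insert_pair:
  fixes M :: "real^'n::finite^'n"
  assumes R: "principal_submatrix_nonsingular M W" and "z \<notin> W" "p \<notin> W" "z \<noteq> p"
    and zz: "M$z$z = 0" and zW: "\<forall>x\<in>W. M$z$x = 0 \<and> M$x$z = 0"
    and pz: "M$p$z \<noteq> 0" and zp: "M$z$p \<noteq> 0"
  shows "principal_submatrix_nonsingular M (insert z (insert p W))"
  unfolding principal_submatrix_nonsingular_def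
proof (intro allI impI)
  fix c assume H: "\<forall>x\<in>insert z (insert p W). (\<Sum>w\<in>insert z (insert p W). c w * M$w$x) = 0"
  have S: "(\<Sum>w\<in>insert z (insert p W). c w * M$w$x)
      = c z * M$z$x + c p * M$p$x + (\<Sum>w\<in>W. c w * M$w$x)" for x
    using assms(2-4) by simp
  have "c p * M$p$z = 0" using H S[of z] zz zW by simp
  then have cp: "c p = 0" using pz by simp
  have "\<forall>x\<in>W. (\<Sum>w\<in>W. c w * M$w$x) = 0" using H S zW cp by simp
  with R have cW: "\<forall>w\<in>W. c w = 0" unfolding principal_submatrix_nonsingular_def by blast
  have "c z * M$z$p = 0" using H S[of p] cW cp by simp
  then have "c z = 0" using zp by simp
  then show "\<forall>w\<in>insert z (insert p W). c w = 0" using cp cW by simp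
qed

lemma independent_set_insert:
  assumes "independent_set E I" "\<not> E z z" "\<forall>x\<in>I. \<not> E z x \<and> \<not> E x z"
  shows "independent_set E (insert z I)"
  using assms unfolding independent_set_def by blast

lemma independent_nonsingular_insert_pendant:
  fixes M :: "real^'n::finite^'n"
  assumes irr: "\<And>x. \<not> E x x" and sym: "\<And>x y. E x y \<Longrightarrow> E y x"
    and pattern: "\<And>x y. M$x$y = 0 \<longleftrightarrow> \<not> E x y"
    and I: "independent_set E I" and W: "principal_submatrix_nonsingular M W"
    and "z \<notin> W" "p \<notin> W" "E z p" and pendant: "\<And>x. x \<in> I \<union> W \<Longrightarrow> \<not> E z x"
  shows "independent_set E (insert z I)"
    and "principal_submatrix_nonsingular M (insert z (insert p W))"
proof -
  show "independent_set E (insert z I)"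
    using I irr pendant sym by (intro independent_set_insert) auto
  have "z \<noteq> p" using \<open>E z p\<close> irr by auto
  then show "principal_submatrix_nonsingular M (insert z (insert p W))"
  proof (rule principal_submatrix_nonsingular_insert_pair[OF W \<open>z \<notin> W\<close> \<open>p \<notin> W\<close>])
    show "M$z$z = 0" "M$p$z \<noteq> 0" "M$z$p \<noteq> 0" using irr \<open>E z p\<close> sym pattern by auto
    show "\<forall>x\<in>W. M$z$x = 0 \<and> M$x$z = 0" using pendant sym by (auto simp: pattern)
  qed
qed

text \<open>Repeatedly remove the
  latest vertex \<open>z\<close>: if its earlier neighbour \<open>p\<close> is still present, \<open>z\<close> is pendant and
  contributes to \<open>I\<close> and the nonsingular block \<open>{z, p}\<close> to \<open>W\<close>; otherwise \<open>z\<close> is isolated.\<close>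
lemma greedy_independent_nonsingular:
  fixes M :: "real^'n::finite^'n" and key :: "'n \<Rightarrow> nat"
  assumes irr: "\<And>x. \<not> E x x" and sym: "\<And>x y. E x y \<Longrightarrow> E y x"
    and pattern: "\<And>x y. M$x$y = 0 \<longleftrightarrow> \<not> E x y" and "inj key"
    and "\<forall>z\<in>S. \<forall>y\<in>S. E z y \<and> key y < key z \<longrightarrow> y = \<pi> z"
  shows "\<exists>I W. I \<subseteq> S \<and> W \<subseteq> S \<and> independent_set E I \<and> principal_submatrix_nonsingular M W
           \<and> 2 * card S \<le> card W + 2 * card I"
  using assms(5)
proof (induction "card S" arbitrary: S rule: less_induct)
  case less
  show ?case
  proof (cases "S = {}")
    case True
    then show ?thesis
      by (intro exI[of _ "{}"]) (simp add: principal_submatrix_nonsingular_empty independent_set_def)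
  next
    case False
    have "Max (key ` S) \<in> key ` S" using False by simp
    then obtain z where zS: "z \<in> S" and zk: "key z = Max (key ` S)" by auto
    have nbr: "y = \<pi> z" if "E z y" "y \<in> S" for y
    proof -
      have "key y \<le> key z" using zk that(2) by simp
      moreover have "key y \<noteq> key z" using \<open>inj key\<close> irr that(1) by (metis injD)
      ultimately have "key y < key z" by simp
      then show ?thesis using less.prems zS that by blast
    qed
    show ?thesis
    proof (cases "\<pi> z \<in> S \<and> E z (\<pi> z)")
      case True
      define p where "p = \<pi> z"
      have pS: "p \<in> S" and zp: "E z p" and "z \<noteq> p" using True irr unfolding p_def by auto
      define S' where "S' = S - {z, p}"
      have "card {z, p} \<le> card S" using zS pS by (intro card_mono) auto
      then have cS: "card S = card S' + 2"
        using zS pS \<open>z \<noteq> p\<close> unfolding S'_def by (simp add: card_Diff_subset)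
      have "\<forall>z\<in>S'. \<forall>y\<in>S'. E z y \<and> key y < key z \<longrightarrow> y = \<pi> z"
        using less.prems unfolding S'_def by blast
      then obtain I W where IW: "I \<subseteq> S'" "W \<subseteq> S'" "independent_set E I"
          "principal_submatrix_nonsingular M W" "2 * card S' \<le> card W + 2 * card I"
        using less.hyps[of S'] cS by auto
      have pendant: "\<not> E z x" if "x \<in> I \<union> W" for x
        using nbr[of x] that IW(1,2) unfolding S'_def p_def by auto
      have "z \<notin> I" "z \<notin> W" "p \<notin> W" using IW(1,2) unfolding S'_def by auto
      note extend = independent_nonsingular_insert_pendant[OF irr sym pattern IW(3,4)
          \<open>z \<notin> W\<close> \<open>p \<notin> W\<close> zp pendant]
      have "2 * card S \<le> card (insert z (insert p W)) + 2 * card (insert z I)"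
        using IW(5) cS \<open>z \<notin> I\<close> \<open>z \<notin> W\<close> \<open>p \<notin> W\<close> \<open>z \<noteq> p\<close> by simp
      moreover have "insert z I \<subseteq> S" "insert z (insert p W) \<subseteq> S"
        using IW(1,2) zS pS unfolding S'_def by auto
      ultimately show ?thesis using extend by blast
    next
      case False
      define S' where "S' = S - {z}"
      have cS: "card S = card S' + 1"
        using zS card_Suc_Diff1[of S z] unfolding S'_def by auto
      have "\<forall>z\<in>S'. \<forall>y\<in>S'. E z y \<and> key y < key z \<longrightarrow> y = \<pi> z"
        using less.prems unfolding S'_def by blast
      then obtain I W where IW: "I \<subseteq> S'" "W \<subseteq> S'" "independent_set E I"
          "principal_submatrix_nonsingular M W" "2 * card S' \<le> card W + 2 * card I"
        using less.hyps[of S'] cS by auto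
      have "\<not> E z x" "\<not> E x z" if "x \<in> S" for x
        using nbr[of x] sym[of x z] irr False that by auto
      then have "independent_set E (insert z I)"
        using IW(1,3) irr unfolding S'_def by (intro independent_set_insert) auto
      moreover have "2 * card S \<le> card W + 2 * card (insert z I)"
        using IW(1,5) cS unfolding S'_def by (simp add: subset_Diff_insert)
      moreover have "insert z I \<subseteq> S" "W \<subseteq> S" using IW(1,2) zS unfolding S'_def by auto
      ultimately show ?thesis using IW(4) by blast
    qed
  qed
qed

definition edge_set :: "('n \<Rightarrow> 'n \<Rightarrow> bool) \<Rightarrow> 'n set set" where
  "edge_set E = {e. \<exists>x y. e = {x, y} \<and> E x y}"

lemma num_edges_eq_card_edge_set: "num_edges A = card (edge_set (und_adj A))"
  by (simp add: num_edges_def edge_set_def)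

lemma card_le_independence_number:
  fixes E :: "'n::finite \<Rightarrow> 'n \<Rightarrow> bool"
  assumes "independent_set E I"
  shows "card I \<le> independence_number E"
  unfolding independence_number_def by (rule Max_ge) (use assms in auto)

lemma independence_number_attained:
  fixes E :: "'n::finite \<Rightarrow> 'n \<Rightarrow> bool"
  obtains I where "independent_set E I" "card I = independence_number E"
proof -
  have "{} \<in> {I. independent_set E I}" by (simp add: independent_set_def)
  then have "independence_number E \<in> card ` {I. independent_set E I}"
    unfolding independence_number_def by (intro Max_in) auto
  then show ?thesis using that by auto
qed

lemma independence_number_ge_1:
  fixes E :: "'n::finite \<Rightarrow> 'n \<Rightarrow> bool"
  assumes "\<And>x. \<not> E x x"
  shows "1 \<le> independence_number E"
  using card_le_independence_number[of E "{undefined}"] assms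
  by (simp add: independent_set_def)

lemma ex_inj_strict_mono_key:
  fixes d :: "'n::finite \<Rightarrow> nat"
  obtains key :: "'n \<Rightarrow> nat" where "inj key" "\<And>x y. d y < d x \<Longrightarrow> key y < key x"
proof -
  define n where "n = CARD('n)"
  obtain h :: "'n \<Rightarrow> nat" where "bij_betw h UNIV {0..<n}"
    using ex_bij_betw_finite_nat[of "UNIV :: 'n set"] unfolding n_def by auto
  then have h_lt: "h x < n" and "inj h" for x by (auto simp: bij_betw_def)
  define key where "key x = d x * n + h x" for x
  have "inj key"
  proof (rule injI)
    fix x y assume "key x = key y"
    then have "h x = h y"
      unfolding key_def using h_lt[of x] h_lt[of y] by (metis add.commute mod_mult_self3 mod_less)
    then show "x = y" using \<open>inj h\<close> by (simp add: inj_def)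
  qed
  moreover have "key y < key x" if "d y < d x" for x y
  proof -
    have "key y < (d y + 1) * n" using h_lt[of y] by (simp add: key_def)
    also have "\<dots> \<le> d x * n" using that by (intro mult_right_mono) auto
    also have "\<dots> \<le> key x" by (simp add: key_def)
    finally show ?thesis .
  qed
  ultimately show ?thesis using that by blast
qed

lemma connected_graph_rooted_order:
  fixes E :: "'n::finite \<Rightarrow> 'n \<Rightarrow> bool" and r :: 'n
  assumes "connected_graph E"
  obtains key :: "'n \<Rightarrow> nat" and parent where "inj key"
    "\<And>x. x \<noteq> r \<Longrightarrow> E (parent x) x \<and> key (parent x) < key x"
proof -
  define d where "d x = (LEAST k. (E ^^ k) r x)" for x
  have "\<exists>k. (E ^^ k) r x" for x
    using assms rtranclp_imp_relpowp unfolding connected_graph_def by metis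
  then have walk: "(E ^^ d x) r x" for x unfolding d_def by (rule LeastI_ex)
  have closer: "\<exists>y. E y x \<and> d y < d x" if "x \<noteq> r" for x
  proof (cases "d x")
    case 0
    then show ?thesis using walk[of x] that by simp
  next
    case (Suc j)
    then obtain y where "(E ^^ j) r y" "E y x" using walk[of x] by (metis relpowp_Suc_E)
    moreover from this(1) have "d y \<le> j" unfolding d_def by (rule Least_le)
    ultimately show ?thesis using Suc by auto
  qed
  obtain key :: "'n \<Rightarrow> nat" where "inj key" and key: "\<And>x y. d y < d x \<Longrightarrow> key y < key x"
    using ex_inj_strict_mono_key[of d] by blast
  have "\<exists>y. E y x \<and> key y < key x" if "x \<noteq> r" for x
    using closer[OF that] key by blast
  then obtain parent where "\<And>x. x \<noteq> r \<Longrightarrow> E (parent x) x \<and> key (parent x) < key x"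
    by metis
  with \<open>inj key\<close> show ?thesis using that by blast
qed

lemma card_edge_set_ge_tree_plus_back_edges:
  fixes E :: "'n::finite \<Rightarrow> 'n \<Rightarrow> bool" and key :: "'n \<Rightarrow> nat"
  assumes sym: "\<And>x y. E x y \<Longrightarrow> E y x"
    and parent: "\<And>x. x \<noteq> r \<Longrightarrow> E (parent x) x \<and> key (parent x) < key x"
  shows "CARD('n) - 1 + card {x. \<exists>y. E x y \<and> key y < key x \<and> y \<noteq> parent x}
           \<le> card (edge_set E)"
proof -
  define D where "D = {x. \<exists>y. E x y \<and> key y < key x \<and> y \<noteq> parent x}"
  have "\<forall>x\<in>D. \<exists>y. E x y \<and> key y < key x \<and> y \<noteq> parent x" unfolding D_def by blast
  then obtain cross where cross: "\<And>x. x \<in> D \<Longrightarrow> E x (cross x) \<and> key (cross x) < key x \<and> cross x \<noteq> parent x"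
    using bchoice by metis
  have later_end_eq: "x = y \<and> a = b" if "key a < key x" "key b < key y" "{x, a} = {y, b}"
    for x y a b :: 'n
    using that by (auto simp: doubleton_eq_iff)
  have "inj_on (\<lambda>x. {x, parent x}) (-{r})"
  proof (rule inj_onI)
    fix x y assume "x \<in> -{r}" "y \<in> -{r}" "{x, parent x} = {y, parent y}"
    then show "x = y" using parent later_end_eq[of "parent x" x "parent y" y] by auto
  qed
  moreover have "inj_on (\<lambda>x. {x, cross x}) D"
  proof (rule inj_onI)
    fix x y assume "x \<in> D" "y \<in> D" "{x, cross x} = {y, cross y}"
    then show "x = y" using cross later_end_eq[of "cross x" x "cross y" y] by auto
  qed
  moreover have "(\<lambda>x. {x, parent x}) ` (-{r}) \<inter> (\<lambda>x. {x, cross x}) ` D = {}"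
  proof -
    have "{x, parent x} \<noteq> {y, cross y}" if "x \<noteq> r" "y \<in> D" for x y
      using parent[OF that(1)] cross[OF that(2)] later_end_eq[of "parent x" x "cross y" y] by auto
    then show ?thesis by auto
  qed
  ultimately have "card ((\<lambda>x. {x, parent x}) ` (-{r}) \<union> (\<lambda>x. {x, cross x}) ` D)
      = card (-{r} :: 'n set) + card D"
    by (simp add: card_Un_disjoint card_image)
  moreover have "(\<lambda>x. {x, parent x}) ` (-{r}) \<union> (\<lambda>x. {x, cross x}) ` D \<subseteq> edge_set E"
    using parent cross sym unfolding edge_set_def by blast
  then have "card ((\<lambda>x. {x, parent x}) ` (-{r}) \<union> (\<lambda>x. {x, cross x}) ` D) \<le> card (edge_set E)"
    by (intro card_mono) simp_all
  moreover have "card (-{r} :: 'n set) = CARD('n) - 1"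
    by (simp add: Compl_eq_Diff_UNIV card_Diff_subset)
  ultimately show ?thesis unfolding D_def by simp
qed

lemma card_le_rank_independence_number_edges:
  fixes E :: "'n::finite \<Rightarrow> 'n \<Rightarrow> bool" and M :: "real^'n^'n"
  assumes irr: "\<And>x. \<not> E x x" and sym: "\<And>x y. E x y \<Longrightarrow> E y x"
    and pattern: "\<And>x y. M$x$y = 0 \<longleftrightarrow> \<not> E x y" and "connected_graph E"
  shows "4 * CARD('n) \<le> rank M + 2 * independence_number E + 2 * card (edge_set E) + 2"
proof -
  obtain r :: 'n where True by blast
  obtain key :: "'n \<Rightarrow> nat" and parent where "inj key"
    and parent: "\<And>x. x \<noteq> r \<Longrightarrow> E (parent x) x \<and> key (parent x) < key x"
    using connected_graph_rooted_order[OF \<open>connected_graph E\<close>] by blast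
  define D where "D = {x. \<exists>y. E x y \<and> key y < key x \<and> y \<noteq> parent x}"
  have edges: "CARD('n) - 1 + card D \<le> card (edge_set E)"
    unfolding D_def by (rule card_edge_set_ge_tree_plus_back_edges[of E r, OF sym parent])
  have "\<forall>z\<in>-D. \<forall>y\<in>-D. E z y \<and> key y < key z \<longrightarrow> y = parent z"
    unfolding D_def by blast
  then obtain I W where I: "independent_set E I" and W: "principal_submatrix_nonsingular M W"
    and greedy: "2 * card (-D) \<le> card W + 2 * card I"
    using greedy_independent_nonsingular[OF irr sym pattern \<open>inj key\<close>] by blast
  have "card W \<le> rank M" using W by (rule card_le_rank_if_principal_submatrix_nonsingular)
  moreover have "card I \<le> independence_number E" using I by (rule card_le_independence_number)
  moreover have "card (-D) = CARD('n) - card D"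
    by (simp add: Compl_eq_Diff_UNIV card_Diff_subset)
  moreover have "card D \<le> CARD('n)" by (simp add: card_mono)
  moreover have "0 < CARD('n)" by simp
  ultimately show ?thesis using edges greedy by linarith
qed

lemma two_mult_choose_two: "2 * (k choose 2) = k * (k - 1)"
proof (induction k)
  case (Suc k)
  have "Suc k choose 2 = k + (k choose 2)"
    using choose_reduce_nat[of "Suc k" 2] by (simp add: numeral_2_eq_2)
  then show ?case using Suc by (cases k) (auto simp: algebra_simps)
qed simp

lemma of_nat_mult_pred: "real (k * (k - 1)) = real k * (real k - 1)"
  by (cases k) (auto simp: algebra_simps)

lemma card_edge_set_choose_two_le:
  fixes E :: "'n::finite \<Rightarrow> 'n \<Rightarrow> bool"
  assumes irr: "\<And>x. \<not> E x x" and sym: "\<And>x y. E x y \<Longrightarrow> E y x" and "independent_set E I"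
  shows "card (edge_set E) + (card I choose 2) \<le> CARD('n) choose 2"
    and "card (edge_set E) + (card I choose 2) = CARD('n) choose 2 \<Longrightarrow> x \<noteq> y
           \<Longrightarrow> E x y \<or> x \<in> I \<and> y \<in> I"
proof -
  define P where "P = {B. B \<subseteq> (UNIV :: 'n set) \<and> card B = 2}"
  define Q where "Q = {B. B \<subseteq> I \<and> card B = 2}"
  have "card P = CARD('n) choose 2" unfolding P_def by (rule n_subsets) simp
  moreover have "card Q = card I choose 2" unfolding Q_def by (rule n_subsets) simp
  moreover have "edge_set E \<inter> Q = {}"
    using \<open>independent_set E I\<close> unfolding edge_set_def Q_def independent_set_def by auto
  ultimately have card_union: "card (edge_set E \<union> Q) = card (edge_set E) + (card I choose 2)"
    by (simp add: card_Un_disjoint)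
  have "{x, y} \<in> P" if "E x y" for x y
    using irr[of x] that unfolding P_def by (cases "x = y") auto
  then have union_sub: "edge_set E \<union> Q \<subseteq> P"
    unfolding edge_set_def Q_def by (auto simp: P_def)
  then show "card (edge_set E) + (card I choose 2) \<le> CARD('n) choose 2"
    using card_mono[OF _ union_sub] card_union \<open>card P = _\<close> by simp
  assume "card (edge_set E) + (card I choose 2) = CARD('n) choose 2" and "x \<noteq> y"
  then have "edge_set E \<union> Q = P"
    using union_sub card_union \<open>card P = _\<close> by (intro card_subset_eq) auto
  moreover have "{x, y} \<in> P" using \<open>x \<noteq> y\<close> unfolding P_def by auto
  ultimately show "E x y \<or> x \<in> I \<and> y \<in> I"
    unfolding edge_set_def Q_def using sym by (auto simp: doubleton_eq_iff)
qed

lemma card_edge_set_independent_le: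
  fixes E :: "'n::finite \<Rightarrow> 'n \<Rightarrow> bool"
  assumes "\<And>x. \<not> E x x" "\<And>x y. E x y \<Longrightarrow> E y x" "independent_set E I"
  shows "2 * real (card (edge_set E)) + real (card I) * (real (card I) - 1)
           \<le> real CARD('n) * (real CARD('n) - 1)"
proof -
  have "2 * card (edge_set E) + 2 * (card I choose 2) \<le> 2 * (CARD('n) choose 2)"
    using card_edge_set_choose_two_le(1)[OF assms] by simp
  then have "2 * card (edge_set E) + card I * (card I - 1) \<le> CARD('n) * (CARD('n) - 1)"
    by (simp only: two_mult_choose_two)
  then have "real (2 * card (edge_set E) + card I * (card I - 1)) \<le> real (CARD('n) * (CARD('n) - 1))"
    by (simp only: of_nat_le_iff)
  then show ?thesis by (simp only: of_nat_add of_nat_mult_pred)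
qed

lemma adj_or_mem_if_card_edge_set_independent_eq:
  fixes E :: "'n::finite \<Rightarrow> 'n \<Rightarrow> bool"
  assumes "\<And>x. \<not> E x x" "\<And>x y. E x y \<Longrightarrow> E y x" "independent_set E I"
    and "2 * real (card (edge_set E)) + real (card I) * (real (card I) - 1)
           = real CARD('n) * (real CARD('n) - 1)"
    and "x \<noteq> y"
  shows "E x y \<or> x \<in> I \<and> y \<in> I"
proof -
  have "real (2 * card (edge_set E) + card I * (card I - 1)) = real (CARD('n) * (CARD('n) - 1))"
    using assms(4) by (simp only: of_nat_add of_nat_mult_pred)
  then have "2 * card (edge_set E) + card I * (card I - 1) = CARD('n) * (CARD('n) - 1)"
    by (simp only: of_nat_eq_iff)
  then have "2 * (card (edge_set E) + (card I choose 2)) = 2 * (CARD('n) choose 2)"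
    by (simp only: distrib_left two_mult_choose_two)
  then have "card (edge_set E) + (card I choose 2) = CARD('n) choose 2"
    by simp
  then show ?thesis using card_edge_set_choose_two_le(2)[OF assms(1-3)] assms(5) by blast
qed

lemma independence_number_le_sqrt:
  fixes E :: "'n::finite \<Rightarrow> 'n \<Rightarrow> bool"
  assumes "\<And>x. \<not> E x x" "\<And>x y. E x y \<Longrightarrow> E y x"
  shows "real (independence_number E) - 1/2
           \<le> sqrt (real CARD('n) * (real CARD('n) - 1) - 2 * real (card (edge_set E)) + 1/4)"
proof -
  obtain I where I: "independent_set E I" "card I = independence_number E"
    by (rule independence_number_attained)
  have "(real (independence_number E) - 1/2)^2
      \<le> real CARD('n) * (real CARD('n) - 1) - 2 * real (card (edge_set E)) + 1/4"
    using card_edge_set_independent_le[OF assms I(1)] I(2) by (simp add: power2_eq_square algebra_simps)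
  then show ?thesis by (rule real_le_rsqrt)
qed

lemma und_adj_sym: "und_adj A x y \<Longrightarrow> und_adj A y x"
  by (auto simp: und_adj_def)

lemma und_adj_irrefl: "oriented_graph A \<Longrightarrow> \<not> und_adj A x x"
  by (simp add: oriented_graph_def und_adj_def)

lemma skew_adj_eq_0_iff: "skew_adj A $ x $ y = 0 \<longleftrightarrow> \<not> und_adj A x y"
  by (simp add: skew_adj_def und_adj_def)

lemma skew_rank_ge_2_if_adj:
  fixes A :: "('n::finite \<times> 'n) set"
  assumes "oriented_graph A" "und_adj A u v"
  shows "2 \<le> skew_rank A"
proof -
  have "u \<noteq> v" using assms und_adj_irrefl by metis
  have "principal_submatrix_nonsingular (skew_adj A) {u, v}"
  proof (rule principal_submatrix_nonsingular_insert_pair[OF principal_submatrix_nonsingular_empty])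
    show "skew_adj A $ u $ u = 0" "skew_adj A $ v $ u \<noteq> 0" "skew_adj A $ u $ v \<noteq> 0"
      using assms(2) und_adj_irrefl[OF assms(1)] und_adj_sym by (auto simp: skew_adj_eq_0_iff)
  qed (use \<open>u \<noteq> v\<close> in auto)
  then have "card {u, v} \<le> skew_rank A"
    unfolding skew_rank_def by (rule card_le_rank_if_principal_submatrix_nonsingular)
  then show ?thesis using \<open>u \<noteq> v\<close> by simp
qed

text \<open>All rows but the centre's are multiples of the centre's unit vector.\<close>
lemma skew_rank_le_2_if_star:
  fixes A :: "('n::finite \<times> 'n) set"
  assumes star: "\<And>x y. und_adj A x y \<longleftrightarrow> x \<noteq> y \<and> (x = u \<or> y = u)"
  shows "skew_rank A \<le> 2"
proof -
  define M where "M = skew_adj A"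
  have "M$x \<in> span {axis u 1, M$u}" for x
  proof (cases "x = u")
    case False
    have "M$x = (M$x$u) *\<^sub>R axis u 1"
      using star False by (auto simp: vec_eq_iff axis_def M_def skew_adj_eq_0_iff)
    then show ?thesis by (metis insertI1 span_base span_scale)
  qed (simp add: span_base)
  then have "rows M \<subseteq> span {axis u 1, M$u}"
    by (auto simp: rows_def row_def vec_lambda_eta)
  then have "dim (rows M) \<le> card {axis u (1::real), M$u}" by (rule dim_le_card) simp
  also have "\<dots> \<le> 2" by (simp add: card_insert_if)
  finally show ?thesis by (simp add: skew_rank_def row_rank_def M_def)
qed

text \<open>A skew-symmetric matrix of odd order is singular: \<open>det M = det (M\<^sup>T) = (-1)^n det M\<close>.\<close>
lemma skew_rank_less_card_if_odd:
  fixes A :: "('n::finite \<times> 'n) set"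
  assumes "oriented_graph A" "odd CARD('n)"
  shows "skew_rank A < CARD('n)"
proof -
  define M where "M = skew_adj A"
  have "transpose M = (\<chi> i. (-1::real) *s M$i)"
    using assms(1) unfolding M_def oriented_graph_def
    by (auto simp: vec_eq_iff transpose_def skew_adj_def)
  then have "det M = det (\<chi> i. (-1::real) *s M$i)"
    using det_transpose[of M] by simp
  also have "\<dots> = (-1) ^ CARD('n) * det M"
    unfolding det_rows_mul by (simp add: vec_lambda_eta)
  also have "\<dots> = - det M" using assms(2) by simp
  finally have "det M = 0" by simp
  then show ?thesis by (simp add: det_eq_0_rank skew_rank_def M_def)
qed

lemma graph_iso_star_iff:
  fixes E :: "'n::finite \<Rightarrow> 'n \<Rightarrow> bool"
  shows "graph_iso UNIV E {0..<CARD('n)} star_adj \<longleftrightarrow> (\<exists>u. \<forall>x y. E x y \<longleftrightarrow> x \<noteq> y \<and> (x = u \<or> y = u))"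
proof
  assume "graph_iso UNIV E {0..<CARD('n)} star_adj"
  then obtain f where f: "bij_betw f UNIV {0..<CARD('n)}"
    and fE: "\<And>x y. E x y \<longleftrightarrow> star_adj (f x) (f y)"
    unfolding graph_iso_def by blast
  have "0 \<in> f ` UNIV" using f by (simp add: bij_betw_def)
  then obtain u where "f u = 0" by auto
  then have "f x = 0 \<longleftrightarrow> x = u" for x using f by (metis bij_betw_imp_inj_on injD)
  then show "\<exists>u. \<forall>x y. E x y \<longleftrightarrow> x \<noteq> y \<and> (x = u \<or> y = u)"
    using fE f by (auto simp: star_adj_def bij_betw_def inj_eq)
next
  assume "\<exists>u. \<forall>x y. E x y \<longleftrightarrow> x \<noteq> y \<and> (x = u \<or> y = u)"
  then obtain u where star: "\<And>x y. E x y \<longleftrightarrow> x \<noteq> y \<and> (x = u \<or> y = u)" by blast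
  obtain g :: "'n \<Rightarrow> nat" where g: "bij_betw g UNIV {0..<CARD('n)}"
    using ex_bij_betw_finite_nat[of "UNIV :: 'n set"] by auto
  define f where "f = Transposition.transpose 0 (g u) \<circ> g"
  have "g u < CARD('n)" using g by (auto simp: bij_betw_def)
  have f: "bij_betw f UNIV {0..<CARD('n)}"
    unfolding f_def by (rule bij_betw_trans[OF g]) (simp add: \<open>g u < CARD('n)\<close>)
  then have f_eq: "f x = f y \<longleftrightarrow> x = y" for x y by (auto simp: bij_betw_def inj_eq)
  have f_0: "f x = 0 \<longleftrightarrow> x = u" for x
  proof -
    have "f x = 0 \<longleftrightarrow> g x = g u" by (auto simp: f_def transpose_eq_iff)
    also have "\<dots> \<longleftrightarrow> x = u" using g by (auto simp: bij_betw_def inj_eq)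
    finally show ?thesis .
  qed
  have "E x y \<longleftrightarrow> star_adj (f x) (f y)" for x y
    by (simp add: star star_adj_def f_eq f_0)
  with f show "graph_iso UNIV E {0..<CARD('n)} star_adj"
    unfolding graph_iso_def by blast
qed

lemma graph_iso_triangle_iff:
  fixes E :: "'n::finite \<Rightarrow> 'n \<Rightarrow> bool"
  shows "graph_iso UNIV E {0..<3} tri_adj \<longleftrightarrow> CARD('n) = 3 \<and> (\<forall>x y. E x y \<longleftrightarrow> x \<noteq> y)"
proof
  assume "graph_iso UNIV E {0..<3} tri_adj"
  then obtain f where f: "bij_betw f UNIV {0..<3::nat}" and "\<And>x y. E x y \<longleftrightarrow> tri_adj (f x) (f y)"
    unfolding graph_iso_def by blast
  then show "CARD('n) = 3 \<and> (\<forall>x y. E x y \<longleftrightarrow> x \<noteq> y)"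
    using bij_betw_same_card[OF f] by (auto simp: tri_adj_def bij_betw_def inj_eq)
next
  assume "CARD('n) = 3 \<and> (\<forall>x y. E x y \<longleftrightarrow> x \<noteq> y)"
  moreover obtain g :: "'n \<Rightarrow> nat" where "bij_betw g UNIV {0..<CARD('n)}"
    using ex_bij_betw_finite_nat[of "UNIV :: 'n set"] by auto
  ultimately show "graph_iso UNIV E {0..<3} tri_adj"
    unfolding graph_iso_def tri_adj_def by (auto simp: bij_betw_def inj_eq)
qed

lemma card_edge_set_star:
  fixes E :: "'n::finite \<Rightarrow> 'n \<Rightarrow> bool"
  assumes "\<And>x y. E x y \<longleftrightarrow> x \<noteq> y \<and> (x = u \<or> y = u)"
  shows "card (edge_set E) = CARD('n) - 1"
proof -
  have "edge_set E = (\<lambda>x. {u, x}) ` (-{u})"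
    using assms by (auto simp: edge_set_def insert_commute)
  moreover have "inj_on (\<lambda>x. {u, x}) (-{u})"
    by (rule inj_onI) (auto simp: doubleton_eq_iff)
  ultimately show ?thesis
    by (simp add: card_image Compl_eq_Diff_UNIV card_Diff_subset)
qed

lemma card_edge_set_complete:
  fixes E :: "'n::finite \<Rightarrow> 'n \<Rightarrow> bool"
  assumes "\<And>x y. E x y \<longleftrightarrow> x \<noteq> y"
  shows "card (edge_set E) = CARD('n) choose 2"
proof -
  have "edge_set E = {B. B \<subseteq> UNIV \<and> card B = 2}"
    using assms by (auto simp: edge_set_def card_2_iff)
  moreover have "card {B. B \<subseteq> (UNIV :: 'n set) \<and> card B = 2} = CARD('n) choose 2"
    by (rule n_subsets) simp
  ultimately show ?thesis by simp
qed

definition sr_alpha_bound :: "nat \<Rightarrow> nat \<Rightarrow> real" where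
  "sr_alpha_bound n m = 4 * real n - 2 * real m - 3 * sqrt (real n * (real n - 1) - 2 * real m + 1/4) - 7/2"

lemma sr_alpha_bound_le:
  fixes A :: "('n::finite \<times> 'n) set"
  assumes "oriented_graph A" "connected_graph (und_adj A)"
  shows "sr_alpha_bound CARD('n) (num_edges A)
           \<le> real (skew_rank A) - real (independence_number (und_adj A))"
proof -
  have "4 * CARD('n) \<le> skew_rank A + 2 * independence_number (und_adj A) + 2 * num_edges A + 2"
    using card_le_rank_independence_number_edges[OF und_adj_irrefl[OF assms(1)] und_adj_sym
        skew_adj_eq_0_iff assms(2)]
    unfolding skew_rank_def num_edges_eq_card_edge_set .
  moreover have "real (independence_number (und_adj A)) - 1/2
      \<le> sqrt (real CARD('n) * (real CARD('n) - 1) - 2 * real (num_edges A) + 1/4)"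
    using independence_number_le_sqrt[OF und_adj_irrefl[OF assms(1)] und_adj_sym]
    unfolding num_edges_eq_card_edge_set .
  ultimately show ?thesis unfolding sr_alpha_bound_def by linarith
qed

lemma sqrt_quarter: "sqrt (1/4) = 1/2"
  by (rule real_sqrt_unique) (auto simp: power2_eq_square)

lemma sr_alpha_bound_attained_if_star:
  fixes A :: "('n::finite \<times> 'n) set"
  assumes og: "oriented_graph A" and star: "\<And>x y. und_adj A x y \<longleftrightarrow> x \<noteq> y \<and> (x = u \<or> y = u)"
  shows "real (skew_rank A) - real (independence_number (und_adj A))
           \<le> sr_alpha_bound CARD('n) (num_edges A)"
proof -
  have m: "num_edges A = CARD('n) - 1"
    using card_edge_set_star[OF star] by (simp add: num_edges_eq_card_edge_set)
  have "independent_set (und_adj A) (-{u})" using star by (auto simp: independent_set_def)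
  then have "card (-{u}) \<le> independence_number (und_adj A)"
    by (rule card_le_independence_number)
  then have a: "CARD('n) - 1 \<le> independence_number (und_adj A)"
    by (simp add: Compl_eq_Diff_UNIV card_Diff_subset)
  have a1: "1 \<le> independence_number (und_adj A)"
    using independence_number_ge_1 und_adj_irrefl[OF og] by blast
  show ?thesis
  proof (cases "CARD('n) = 1")
    case True
    then have "skew_rank A = 0" using skew_rank_less_card_if_odd[OF og] by simp
    then show ?thesis using True m a1 by (simp add: sr_alpha_bound_def sqrt_quarter)
  next
    case False
    moreover have "0 < CARD('n)" by simp
    ultimately have n2: "2 \<le> CARD('n)" by linarith
    then have m_real: "real (num_edges A) = real CARD('n) - 1" using m by (simp add: of_nat_diff)
    have "real CARD('n) * (real CARD('n) - 1) - 2 * real (num_edges A) + 1/4 = (real CARD('n) - 3/2)^2"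
      unfolding m_real by (simp add: power2_eq_square algebra_simps)
    then have "sqrt (real CARD('n) * (real CARD('n) - 1) - 2 * real (num_edges A) + 1/4)
        = real CARD('n) - 3/2"
      using n2 by simp
    moreover have "real CARD('n) - 1 \<le> real (independence_number (und_adj A))"
      using a n2 by linarith
    ultimately show ?thesis
      using skew_rank_le_2_if_star[OF star] m_real unfolding sr_alpha_bound_def by linarith
  qed
qed

lemma sr_alpha_bound_attained_if_triangle:
  fixes A :: "('n::finite \<times> 'n) set"
  assumes og: "oriented_graph A" and "CARD('n) = 3" and complete: "\<And>x y. und_adj A x y \<longleftrightarrow> x \<noteq> y"
  shows "real (skew_rank A) - real (independence_number (und_adj A))
           \<le> sr_alpha_bound CARD('n) (num_edges A)"
proof -
  have "num_edges A = 3"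
    using card_edge_set_complete[OF complete] \<open>CARD('n) = 3\<close>
    by (simp add: num_edges_eq_card_edge_set numeral_3_eq_3 numeral_2_eq_2)
  moreover have "skew_rank A \<le> 2" using skew_rank_less_card_if_odd[OF og] \<open>CARD('n) = 3\<close> by simp
  moreover have "1 \<le> independence_number (und_adj A)"
    using independence_number_ge_1 und_adj_irrefl[OF og] by blast
  ultimately show ?thesis using \<open>CARD('n) = 3\<close> by (simp add: sr_alpha_bound_def sqrt_quarter)
qed

lemma eq_if_connected_graph_without_edges:
  fixes E :: "'a \<Rightarrow> 'a \<Rightarrow> bool" and x y :: 'a
  assumes "connected_graph E" "\<And>x y. \<not> E x y"
  shows "x = y"
proof -
  have "E\<^sup>*\<^sup>* x y" using assms(1) unfolding connected_graph_def by blast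
  then show ?thesis by (induction rule: rtranclp_induct) (auto simp: assms(2))
qed

lemma complete_split_sizes:
  fixes k a s :: nat
  assumes "(real k - 1) * (real k - 4 + 2 * real a) = 2 - real s" "2 \<le> s" "1 \<le> k" "1 \<le> a"
  shows "k = 1 \<or> k = 2 \<and> a = 1"
proof (rule ccontr)
  assume *: "\<not> (k = 1 \<or> k = 2 \<and> a = 1)"
  have "0 < (real k - 1) * (real k - 4 + 2 * real a)"
  proof (cases "k = 2")
    case True
    then have "2 \<le> a" using * assms(4) by linarith
    with True show ?thesis by simp
  next
    case False
    then have "3 \<le> k" using * assms(3) by linarith
    with assms(4) show ?thesis by (intro mult_pos_pos) linarith+
  qed
  then show False using assms(1,2) by linarith
qed

lemma und_adj_star_if_complement_singleton:
  fixes A :: "('n::finite \<times> 'n) set"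
  assumes og: "oriented_graph A" and "independent_set (und_adj A) I" "-I = {u}"
    and cover: "\<And>x y. x \<noteq> y \<Longrightarrow> und_adj A x y \<or> x \<in> I \<and> y \<in> I"
  shows "und_adj A x y \<longleftrightarrow> x \<noteq> y \<and> (x = u \<or> y = u)"
proof -
  have memI: "z \<in> I \<longleftrightarrow> z \<noteq> u" for z using \<open>-I = {u}\<close> by (metis Compl_iff singleton_iff)
  show ?thesis
  proof
    assume adj: "und_adj A x y"
    then have "x \<noteq> y" using und_adj_irrefl[OF og] by auto
    moreover have "\<not> (x \<in> I \<and> y \<in> I)"
      using adj \<open>independent_set (und_adj A) I\<close> unfolding independent_set_def by blast
    ultimately show "x \<noteq> y \<and> (x = u \<or> y = u)" by (auto simp: memI)
  qed (use cover[of x y] memI in auto)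
qed

text \<open>Equality in both estimates forces \<open>G\<close> to be a complete split graph: a clique on the
  complement of a maximum independent set \<open>I\<close>, joined to all of \<open>I\<close>. With \<open>k = n - \<alpha>\<close>
  vertices outside \<open>I\<close> the edge count turns the rank equation into
  \<open>(k - 1) (k - 4 + 2\<alpha>) = 2 - sr \<le> 0\<close>.\<close>
lemma star_or_triangle_if_complete_split:
  fixes A :: "('n::finite \<times> 'n) set"
  assumes og: "oriented_graph A" and con: "connected_graph (und_adj A)"
    and I: "independent_set (und_adj A) I" "I \<noteq> {}"
    and cover: "\<And>x y. x \<noteq> y \<Longrightarrow> und_adj A x y \<or> x \<in> I \<and> y \<in> I"
    and tight: "real (skew_rank A) + 2 * real (card I) + 2 * real (num_edges A) + 2 = 4 * real CARD('n)"
    and count: "2 * real (num_edges A) + real (card I) * (real (card I) - 1)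
                  = real CARD('n) * (real CARD('n) - 1)"
  shows "(\<exists>u. \<forall>x y. und_adj A x y \<longleftrightarrow> x \<noteq> y \<and> (x = u \<or> y = u))
         \<or> CARD('n) = 3 \<and> (\<forall>x y. und_adj A x y \<longleftrightarrow> x \<noteq> y)"
proof (cases "I = UNIV")
  case True
  then have no_adj: "\<not> und_adj A x y" for x y using I(1) by (simp add: independent_set_def)
  have "und_adj A x y \<longleftrightarrow> x \<noteq> y \<and> (x = u \<or> y = u)" for x y u
    using no_adj eq_if_connected_graph_without_edges[OF con no_adj, of x y] by simp
  then show ?thesis by (intro disjI1 exI allI)
next
  case False
  then obtain u where "u \<notin> I" by blast
  obtain i where "i \<in> I" using I(2) by blast
  then have "und_adj A u i" using cover[of u i] \<open>u \<notin> I\<close> by blast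
  then have "2 \<le> skew_rank A" by (rule skew_rank_ge_2_if_adj[OF og])
  define k where "k = card (-I)"
  have "card (-I) = CARD('n) - card I" "card I \<le> CARD('n)"
    by (simp_all add: Compl_eq_Diff_UNIV card_Diff_subset card_mono)
  then have n: "CARD('n) = card I + k" unfolding k_def by linarith
  have "-I \<noteq> {}" using \<open>u \<notin> I\<close> by blast
  then have "1 \<le> k" unfolding k_def by (simp add: Suc_le_eq card_gt_0_iff)
  have "1 \<le> card I" using I(2) by (simp add: Suc_le_eq card_gt_0_iff)
  have "real (skew_rank A) = 4 * real CARD('n) - 2 * real (card I) - 2
      - (real CARD('n) * (real CARD('n) - 1) - real (card I) * (real (card I) - 1))"
    using tight count by linarith
  also have "\<dots> = 2 - (real k - 1) * (real k - 4 + 2 * real (card I))"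
    using n by (simp add: algebra_simps)
  finally have "(real k - 1) * (real k - 4 + 2 * real (card I)) = 2 - real (skew_rank A)"
    by simp
  then have "k = 1 \<or> k = 2 \<and> card I = 1"
    using complete_split_sizes \<open>2 \<le> skew_rank A\<close> \<open>1 \<le> k\<close> \<open>1 \<le> card I\<close> by blast
  then show ?thesis
  proof
    assume "k = 1"
    then obtain v where "-I = {v}" unfolding k_def by (rule card_1_singletonE)
    then have "-I = {u}" using \<open>u \<notin> I\<close> by (metis Compl_iff singleton_iff)
    then have "und_adj A x y \<longleftrightarrow> x \<noteq> y \<and> (x = u \<or> y = u)" for x y
      by (rule und_adj_star_if_complement_singleton[OF og I(1) _ cover])
    then show ?thesis by (intro disjI1 exI allI)
  next
    assume "k = 2 \<and> card I = 1"
    then have "CARD('n) = 3" using n by simp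
    from \<open>k = 2 \<and> card I = 1\<close> have "card I = 1" by simp
    then obtain j where "I = {j}" by (rule card_1_singletonE)
    then have "und_adj A x y \<longleftrightarrow> x \<noteq> y" for x y
      using cover[of x y] und_adj_irrefl[OF og] by (cases "x = y") auto
    with \<open>CARD('n) = 3\<close> show ?thesis by (intro disjI2 conjI allI)
  qed
qed

lemma star_or_triangle_if_sr_alpha_bound_attained:
  fixes A :: "('n::finite \<times> 'n) set"
  assumes og: "oriented_graph A" and con: "connected_graph (und_adj A)"
    and attained: "real (skew_rank A) - real (independence_number (und_adj A))
                     = sr_alpha_bound CARD('n) (num_edges A)"
  shows "(\<exists>u. \<forall>x y. und_adj A x y \<longleftrightarrow> x \<noteq> y \<and> (x = u \<or> y = u))
         \<or> CARD('n) = 3 \<and> (\<forall>x y. und_adj A x y \<longleftrightarrow> x \<noteq> y)"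
proof -
  define a where "a = independence_number (und_adj A)"
  define r where "r = real CARD('n) * (real CARD('n) - 1) - 2 * real (num_edges A) + 1/4"
  have "4 * CARD('n) \<le> skew_rank A + 2 * a + 2 * num_edges A + 2"
    using card_le_rank_independence_number_edges[OF und_adj_irrefl[OF og] und_adj_sym
        skew_adj_eq_0_iff con]
    unfolding skew_rank_def num_edges_eq_card_edge_set a_def .
  moreover have "real a - 1/2 \<le> sqrt r"
    using independence_number_le_sqrt[OF und_adj_irrefl[OF og] und_adj_sym]
    unfolding num_edges_eq_card_edge_set a_def r_def .
  ultimately have sqrt_r: "sqrt r = real a - 1/2"
    and tight: "real (skew_rank A) + 2 * real a + 2 * real (num_edges A) + 2 = 4 * real CARD('n)"
    using attained unfolding sr_alpha_bound_def a_def[symmetric] r_def[symmetric] by linarith+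
  have "1 \<le> a" unfolding a_def using independence_number_ge_1 und_adj_irrefl[OF og] by blast
  then have "0 < sqrt r" using sqrt_r by simp
  then have "r = (sqrt r)^2" by simp
  then have "r = (real a - 1/2)^2" unfolding sqrt_r .
  then have count: "2 * real (num_edges A) + real a * (real a - 1) = real CARD('n) * (real CARD('n) - 1)"
    unfolding r_def by (simp add: power2_eq_square algebra_simps)
  obtain I where I: "independent_set (und_adj A) I" "card I = a"
    unfolding a_def by (rule independence_number_attained)
  have "I \<noteq> {}" using I(2) \<open>1 \<le> a\<close> by auto
  have count_I: "2 * real (card (edge_set (und_adj A))) + real (card I) * (real (card I) - 1)
      = real CARD('n) * (real CARD('n) - 1)"
    using count I(2) unfolding num_edges_eq_card_edge_set by simp
  have cover: "und_adj A x y \<or> x \<in> I \<and> y \<in> I" if "x \<noteq> y" for x y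
    by (rule adj_or_mem_if_card_edge_set_independent_eq[OF und_adj_irrefl[OF og] und_adj_sym
          I(1) count_I that])
  show ?thesis
    by (rule star_or_triangle_if_complete_split[OF og con I(1) \<open>I \<noteq> {}\<close> cover])
      (use tight count I(2) in simp_all)
qed

theorem theorem1p5:
  fixes A :: "('n::finite \<times> 'n) set"
  assumes "oriented_graph A"
    and "connected_graph (und_adj A)"
  defines "n \<equiv> CARD('n)" and "m \<equiv> num_edges A"
  shows "real (skew_rank A) - real (independence_number (und_adj A))
           \<ge> 4 * real n - 2 * real m - 3 * sqrt (real n * (real n - 1) - 2 * real m + 1/4) - 7/2
         \<and> (real (skew_rank A) - real (independence_number (und_adj A))
           = 4 * real n - 2 * real m - 3 * sqrt (real n * (real n - 1) - 2 * real m + 1/4) - 7/2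
         \<longleftrightarrow> graph_iso UNIV (und_adj A) {0..<n} star_adj
             \<or> graph_iso UNIV (und_adj A) {0..<3} tri_adj)"
  unfolding n_def m_def graph_iso_star_iff graph_iso_triangle_iff sr_alpha_bound_def[symmetric]
proof (intro conjI iffI)
  show ge: "sr_alpha_bound CARD('n) (num_edges A)
      \<le> real (skew_rank A) - real (independence_number (und_adj A))"
    using assms(1,2) by (rule sr_alpha_bound_le)
  assume "(\<exists>u. \<forall>x y. und_adj A x y \<longleftrightarrow> x \<noteq> y \<and> (x = u \<or> y = u))
      \<or> CARD('n) = 3 \<and> (\<forall>x y. und_adj A x y \<longleftrightarrow> x \<noteq> y)"
  then have "real (skew_rank A) - real (independence_number (und_adj A))
      \<le> sr_alpha_bound CARD('n) (num_edges A)"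
  proof (elim disjE exE conjE)
    fix u assume "\<forall>x y. und_adj A x y \<longleftrightarrow> x \<noteq> y \<and> (x = u \<or> y = u)"
    then show ?thesis using sr_alpha_bound_attained_if_star[OF assms(1)] by blast
  next
    assume "CARD('n) = 3" "\<forall>x y. und_adj A x y \<longleftrightarrow> x \<noteq> y"
    then show ?thesis using sr_alpha_bound_attained_if_triangle[OF assms(1)] by blast
  qed
  with ge show "real (skew_rank A) - real (independence_number (und_adj A))
      = sr_alpha_bound CARD('n) (num_edges A)" by linarith
qed (rule star_or_triangle_if_sr_alpha_bound_attained[OF assms(1,2)])

end
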